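(* Let $\beta_{\mathtt{H}},\beta_{\mathtt{L}},\gamma_{\mathtt{H}},\gamma_{\mathtt{L}}>0$ with $\beta_{\mathtt{H}}/\gamma_{\mathtt{H}}>\beta_{\mathtt{L}}/\gamma_{\mathtt{L}}$ and $\beta_{\mathtt{H}}>\beta_{\mathtt{L}}$, $q_{\mathtt{LH}}>0$, $\alpha\in(0,1)$, fix $z_{\mathtt{S}}\in[0,1]$, and set $w(z_{\mathtt{S}}):=\alpha z_{\mathtt{S}}+1-z_{\mathtt{S}}$, $\hat\beta_{\mathtt{Q}}(z_{\mathtt{S}}):=\beta_{\mathtt{Q}}w(z_{\mathtt{S}})$. Consider the uni-directional mutation dynamics \begin{align*} \dot{\mathtt{I}}_{\mathtt{H}}&=\hat\beta_{\mathtt{H}}(z_{\mathtt{S}})\mathtt{I}_{\mathtt{H}}(1-\mathtt{I}_{\mathtt{H}}-\mathtt{I}_{\mathtt{L}})+q_{\mathtt{LH}}\mathtt{I}_{\mathtt{L}}-\gamma_{\mathtt{H}}\mathtt{I}_{\mathtt{H}},\\ \dot{\mathtt{I}}_{\mathtt{L}}&=\hat\beta_{\mathtt{L}}(z_{\mathtt{S}})\mathtt{I}_{\mathtt{L}}(1-\mathtt{I}_{\mathtt{H}}-\mathtt{I}_{\mathtt{L}})-(q_{\mathtt{LH}}+\gamma_{\mathtt{L}})\mathtt{I}_{\mathtt{L}}. \end{align*} Let $\mathcal{D}_2:=\beta_{\mathtt{H}}\gamma_{\mathtt{L}}-\beta_{\mathtt{L}}\gamma_{\mathtt{H}}+\beta_{\mathtt{H}}q_{\mathtt{LH}}-\beta_{\mathtt{L}}q_{\mathtt{LH}}$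 and $\mathcal{N}^{\mathtt{L}}_2:=\gamma_{\mathtt{L}}+q_{\mathtt{LH}}-\hat\beta_{\mathtt{L}}(z_{\mathtt{S}})$. Then the candidate coexistence equilibrium $$\mathbf{E}_3=\Big(\frac{\gamma_{\mathtt{L}}+q_{\mathtt{LH}}}{\hat\beta_{\mathtt{L}}(z_{\mathtt{S}})},\ \frac{q_{\mathtt{LH}}\mathcal{N}^{\mathtt{L}}_2}{w(z_{\mathtt{S}})\mathcal{D}_2},\ \frac{-\mathcal{N}^{\mathtt{L}}_2(\mathcal{D}_2+\beta_{\mathtt{L}}q_{\mathtt{LH}})}{\hat\beta_{\mathtt{L}}(z_{\mathtt{S}})\mathcal{D}_2}\Big)$$ (in coordinates $(\mathtt{S},\mathtt{I}_{\mathtt{H}},\mathtt{I}_{\mathtt{L}})$) does not exist, i.e., its $\mathtt{I}_{\mathtt{H}}$- and $\mathtt{I}_{\mathtt{L}}$-components cannot both be positive.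
   Context: Bi-virus SIS model with mutation only from strain $\mathtt{L}$ to strain $\mathtt{H}$ (rate $q_{\mathtt{LH}}$, with $q_{\mathtt{HL}}=0$); $\mathtt{I}_{\mathtt{H}},\mathtt{I}_{\mathtt{L}}$ infected fractions, $\mathtt{S}=1-\mathtt{I}_{\mathtt{H}}-\mathtt{I}_{\mathtt{L}}$, $\beta$'s transmission rates, $\gamma$'s recovery rates, $z_{\mathtt{S}}$ fraction of susceptibles protected, protection scaling infection rates by $\alpha$. *)

theory Defs
  imports Complex_Main
begin

definition w_prot :: "real \<Rightarrow> real \<Rightarrow> real" where
  "w_prot \<alpha> zS = \<alpha> * zS + 1 - zS"

definition beta_hat :: "real \<Rightarrow> real \<Rightarrow> real \<Rightarrow> real" where
  "beta_hat \<beta> \<alpha> zS = \<beta> * w_prot \<alpha> zS"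

definition D2 :: "real \<Rightarrow> real \<Rightarrow> real \<Rightarrow> real \<Rightarrow> real \<Rightarrow> real" where
  "D2 \<beta>H \<beta>L \<gamma>H \<gamma>L qLH = \<beta>H * \<gamma>L - \<beta>L * \<gamma>H + \<beta>H * qLH - \<beta>L * qLH"

definition N2L :: "real \<Rightarrow> real \<Rightarrow> real \<Rightarrow> real \<Rightarrow> real \<Rightarrow> real" where
  "N2L \<beta>L \<gamma>L qLH \<alpha> zS = \<gamma>L + qLH - beta_hat \<beta>L \<alpha> zS"

definition E3 :: "real \<Rightarrow> real \<Rightarrow> real \<Rightarrow> real \<Rightarrow> real \<Rightarrow> real \<Rightarrow> real \<Rightarrow> real \<times> real \<times> real" where
  "E3 \<beta>H \<beta>L \<gamma>H \<gamma>L qLH \<alpha> zS =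
     ((\<gamma>L + qLH) / beta_hat \<beta>L \<alpha> zS,
      qLH * N2L \<beta>L \<gamma>L qLH \<alpha> zS / (w_prot \<alpha> zS * D2 \<beta>H \<beta>L \<gamma>H \<gamma>L qLH),
      - N2L \<beta>L \<gamma>L qLH \<alpha> zS * (D2 \<beta>H \<beta>L \<gamma>H \<gamma>L qLH + \<beta>L * qLH)
        / (beta_hat \<beta>L \<alpha> zS * D2 \<beta>H \<beta>L \<gamma>H \<gamma>L qLH))"

end

theory Submission
  imports Defs
begin

text \<open>The weight \<open>w = \<alpha> z\<^sub>S + (1 - z\<^sub>S)\<close> is a convex combination of \<open>\<alpha>\<close> and \<open>1\<close>, and
  \<open>\<D>\<^sub>2 = (\<beta>\<^sub>H\<gamma>\<^sub>L - \<beta>\<^sub>L\<gamma>\<^sub>H) + (\<beta>\<^sub>H - \<beta>\<^sub>L) q\<^sub>L\<^sub>H\<close>; both are positive. Hence all factors of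
  the \<open>I\<^sub>H\<close>- and \<open>I\<^sub>L\<close>-components of \<open>E\<^sub>3\<close> other than \<open>\<N>\<^sup>L\<^sub>2\<close> have fixed sign, and the two
  components have the signs of \<open>\<N>\<^sup>L\<^sub>2\<close> and \<open>-\<N>\<^sup>L\<^sub>2\<close> respectively.\<close>

lemma w_prot_pos:
  assumes "0 < \<alpha>" and "0 \<le> zS" and "zS \<le> 1"
  shows "0 < w_prot \<alpha> zS"
proof (cases "zS = 0")
  case False
  then have "0 < \<alpha> * zS" using assms by simp
  then show ?thesis using assms(3) unfolding w_prot_def by linarith
qed (simp add: w_prot_def)

lemma beta_hat_pos:
  assumes "0 < \<beta>" and "0 < w_prot \<alpha> zS"
  shows "0 < beta_hat \<beta> \<alpha> zS"
  using assms by (simp add: beta_hat_def)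

lemma D2_pos:
  assumes "0 < \<gamma>H" and "0 < \<gamma>L" and "\<beta>L / \<gamma>L < \<beta>H / \<gamma>H"
    and "\<beta>L \<le> \<beta>H" and "0 \<le> qLH"
  shows "0 < D2 \<beta>H \<beta>L \<gamma>H \<gamma>L qLH"
proof -
  have "\<beta>L * \<gamma>H < \<beta>H * \<gamma>L" using assms(1-3) by (simp add: field_simps)
  moreover have "\<beta>L * qLH \<le> \<beta>H * qLH" using assms(4,5) by (simp add: mult_right_mono)
  ultimately show ?thesis unfolding D2_def by linarith
qed

lemma E3_infected_H_pos_iff:
  assumes "0 < w_prot \<alpha> zS" and "0 < D2 \<beta>H \<beta>L \<gamma>H \<gamma>L qLH" and "0 < qLH"
  shows "0 < fst (snd (E3 \<beta>H \<beta>L \<gamma>H \<gamma>L qLH \<alpha> zS)) \<longleftrightarrow> 0 < N2L \<beta>L \<gamma>L qLH \<alpha> zS"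
proof -
  have "0 < w_prot \<alpha> zS * D2 \<beta>H \<beta>L \<gamma>H \<gamma>L qLH" using assms(1,2) by simp
  then show ?thesis using assms(3) by (simp add: E3_def pos_less_divide_eq zero_less_mult_iff)
qed

lemma E3_infected_L_pos_iff:
  assumes "0 < beta_hat \<beta>L \<alpha> zS" and "0 < D2 \<beta>H \<beta>L \<gamma>H \<gamma>L qLH" and "0 \<le> \<beta>L * qLH"
  shows "0 < snd (snd (E3 \<beta>H \<beta>L \<gamma>H \<gamma>L qLH \<alpha> zS)) \<longleftrightarrow> N2L \<beta>L \<gamma>L qLH \<alpha> zS < 0"
proof -
  have denom: "0 < beta_hat \<beta>L \<alpha> zS * D2 \<beta>H \<beta>L \<gamma>H \<gamma>L qLH" using assms(1,2) by simp
  have "0 < D2 \<beta>H \<beta>L \<gamma>H \<gamma>L qLH + \<beta>L * qLH" using assms(2,3) by linarith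
  then show ?thesis by (simp add: E3_def pos_divide_less_eq[OF denom] mult_less_0_iff)
qed

theorem proposition2:
  fixes \<beta>H \<beta>L \<gamma>H \<gamma>L qLH \<alpha> zS :: real
  assumes "\<beta>H > 0" "\<beta>L > 0" "\<gamma>H > 0" "\<gamma>L > 0"
    and "\<beta>H / \<gamma>H > \<beta>L / \<gamma>L" and "\<beta>H > \<beta>L"
    and "qLH > 0" and "0 < \<alpha>" "\<alpha> < 1" and "0 \<le> zS" "zS \<le> 1"
  shows "\<not> (fst (snd (E3 \<beta>H \<beta>L \<gamma>H \<gamma>L qLH \<alpha> zS)) > 0 \<and>
             snd (snd (E3 \<beta>H \<beta>L \<gamma>H \<gamma>L qLH \<alpha> zS)) > 0)"
proof -
  have w: "0 < w_prot \<alpha> zS" using assms(8,10,11) by (rule w_prot_pos)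
  have D: "0 < D2 \<beta>H \<beta>L \<gamma>H \<gamma>L qLH" using assms(3-7) by (intro D2_pos) auto
  have "0 < fst (snd (E3 \<beta>H \<beta>L \<gamma>H \<gamma>L qLH \<alpha> zS)) \<longleftrightarrow> 0 < N2L \<beta>L \<gamma>L qLH \<alpha> zS"
    using w D assms(7) by (rule E3_infected_H_pos_iff)
  moreover have "0 < snd (snd (E3 \<beta>H \<beta>L \<gamma>H \<gamma>L qLH \<alpha> zS)) \<longleftrightarrow> N2L \<beta>L \<gamma>L qLH \<alpha> zS < 0"
    using beta_hat_pos[OF assms(2) w] D assms(2,7) by (intro E3_infected_L_pos_iff) auto
  ultimately show ?thesis by linarith
qed

end
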